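(* Let $K\ge2$, $r\in[0,1]^K$ with a unique maximizing index $a^*$, $\pi^*$ the point mass on $a^*$, and $g(\theta)=\pi_\theta^\top r$ with $\pi_\theta=\mathrm{softmax}(\theta)$. Let $\theta_1\in\mathbb{R}^K$ and $\theta_{t+1}=\theta_t+\eta\,\nabla g(\theta_t)/\|\nabla g(\theta_t)\|_2$ with $\eta=1/6$. Then $c:=\inf_{t\ge1}\pi_{\theta_t}(a^* )>0$ (a constant depending on $r$ and $\theta_1$ but not on $t$), and for all $t\ge1$, $$(\pi^*-\pi_{\theta_t})^\top r\le e^{-\frac{c\,(t-1)}{12}}\,(\pi^*-\pi_{\theta_1})^\top r.$$
   Context: $\mathrm{softmax}(\theta)(a)=e^{\theta(a)}/\sum_{a'}e^{\theta(a')}$. *)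

theory Defs
  imports "HOL-Analysis.Analysis"
begin

text \<open>Action set = finite type 'k; vectors in R^K are real^'k (norm = Euclidean 2-norm).\<close>

definition softmax :: "real^'k \<Rightarrow> real^'k" where
  "softmax \<theta> = (\<chi> a. exp (\<theta> $ a) / (\<Sum>a'\<in>UNIV. exp (\<theta> $ a')))"

definition expected_reward :: "real^'k \<Rightarrow> real^'k \<Rightarrow> real" where
  "expected_reward r \<theta> = softmax \<theta> \<bullet> r"

definition grad :: "('a::real_inner \<Rightarrow> real) \<Rightarrow> 'a \<Rightarrow> 'a" where
  "grad f x = (THE D. GDERIV f x :> D)"

definition point_mass :: "'k \<Rightarrow> real^'k" where
  "point_mass a = axis a 1"

end

theory Submission
  imports Defs
begin

text \<open>Write \<open>\<pi>\<close> for \<open>softmax \<theta>\<close> and \<open>g = \<pi> \<bullet> r\<close>. The gradient of \<open>g\<close> is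
\<open>(\<pi> a * (r a - g))\<^sub>a\<close>, and a normalized step of length 1/6 multiplies each \<open>\<pi> a\<close> by
\<open>exp (u a)\<close> with \<open>\<bar>u a\<bar> \<le> 1/6\<close>. A second-order bound on \<open>exp\<close> on this range gives the ascent
\<open>g(\<theta>') - g(\<theta>) \<ge> \<parallel>\<nabla>g\<parallel>/12\<close>, and the non-uniform Lojasiewicz inequality
\<open>\<parallel>\<nabla>g\<parallel> \<ge> \<pi> a\<^sup>* * (r a\<^sup>* - g)\<close> turns it into the contraction
\<open>r a\<^sup>* - g(\<theta>') \<le> (1 - \<pi> a\<^sup>*/12) * (r a\<^sup>* - g(\<theta>))\<close>.

It remains to bound \<open>softmax (\<theta> t) a\<^sup>*\<close> away from 0. Once \<open>g\<close> exceeds every suboptimal reward, the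
update favours \<open>a\<^sup>*\<close> most, so \<open>\<pi> a\<^sup>*\<close> no longer decreases. And \<open>g\<close> does get there: otherwise it
increases to a limit \<open>L < r a\<^sup>*\<close>, and the mass of the arms with reward below \<open>L\<close> shrinks
geometrically relative to \<open>\<pi> a\<^sup>*\<close>, which contradicts
\<open>\<pi> a\<^sup>* * (r a\<^sup>* - L) \<le> \<pi> {a. r a < L}\<close>.\<close>

lemma exp_minus_one_mult_ge:
  fixes u :: real
  assumes "\<bar>u\<bar> \<le> 1/6"
  shows "(5/6) * u\<^sup>2 \<le> u * (exp u - 1)"
proof (cases "u \<ge> 0")
  case True
  then have "(5/6) * u\<^sup>2 \<le> u * u" by (simp add: power2_eq_square)
  also have "\<dots> \<le> u * (exp u - 1)"
    using True exp_ge_add_one_self[of u] by (intro mult_left_mono) linarith+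
  finally show ?thesis .
next
  case False
  have "exp u * (1 - u) \<le> exp u * exp (- u)"
    using exp_ge_add_one_self[of "- u"] by (intro mult_left_mono) auto
  also have "\<dots> = 1" by (simp flip: exp_add)
  also have "1 \<le> (1 + (5/6) * u) * (1 - u)"
  proof -
    have "0 \<le> (- u) * (1 + 5 * u)" using False assms by (intro mult_nonneg_nonneg) auto
    then show ?thesis by (simp add: algebra_simps)
  qed
  finally have "exp u - 1 \<le> (5/6) * u" using False by (simp add: mult_le_cancel_right)
  from mult_left_mono_neg[OF this] False show ?thesis by (simp add: power2_eq_square algebra_simps)
qed

lemma contraction_eventually_less:
  fixes Q :: "nat \<Rightarrow> real"
  assumes contr: "\<forall>n\<ge>n0. Q (Suc n) \<le> \<rho> * Q n" and "0 \<le> \<rho>" "\<rho> < 1" "0 < \<epsilon>"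
  shows "\<exists>n. Q n < \<epsilon>"
proof (cases "Q n0 < \<epsilon>")
  case False
  then have pos: "Q n0 > 0" using assms(4) by simp
  have pow: "Q (n0 + j) \<le> \<rho> ^ j * Q n0" for j
  proof (induction j)
    case (Suc j)
    have "Q (n0 + Suc j) \<le> \<rho> * Q (n0 + j)" using contr by simp
    also have "\<dots> \<le> \<rho> * (\<rho> ^ j * Q n0)" using Suc.IH \<open>0 \<le> \<rho>\<close> by (rule mult_left_mono)
    finally show ?case by simp
  qed simp
  obtain j where "\<rho> ^ j < \<epsilon> / Q n0"
    using real_arch_pow_inv[of "\<epsilon> / Q n0" \<rho>] assms pos by auto
  with pow[of j] pos have "Q (n0 + j) < \<epsilon>" by (simp add: field_simps)
  then show ?thesis by blast
qed blast

lemma eventually_mono_pos_bounded_below: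
  fixes P :: "nat \<Rightarrow> real"
  assumes pos: "\<And>n. 0 < P n" and mono: "\<And>n. n \<ge> n1 \<Longrightarrow> P n \<le> P (Suc n)"
  shows "\<exists>M>0. \<forall>n. M \<le> P n"
proof (intro exI conjI allI)
  define M where "M = Min (P ` {..n1})"
  show "0 < M" unfolding M_def using pos by (subst Min_gr_iff) auto
  show "M \<le> P n" for n
  proof (cases "n \<le> n1")
    case True
    then show ?thesis unfolding M_def by (intro Min_le) auto
  next
    case False
    then have "n1 \<le> n" by simp
    then have "P n1 \<le> P n"
    proof (induction n rule: dec_induct)
      case (step k)
      then show ?case using mono[of k] by simp
    qed simp
    moreover have "M \<le> P n1" unfolding M_def by (intro Min_le) auto
    ultimately show ?thesis by simp
  qed
qed

lemma sum_mult_exp_le: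
  fixes p x :: "'a \<Rightarrow> real"
  assumes D: "finite D" "D \<noteq> {}" and p: "\<And>d. d \<in> D \<Longrightarrow> 0 < p d" and "0 \<le> c"
    and x: "\<And>d. d \<in> D \<Longrightarrow> x d \<le> - c * p d / sum p D"
  shows "(\<Sum>d\<in>D. p d * exp (x d)) \<le> (1 - (1 - exp (- c / card D)) / card D) * sum p D"
proof -
  define k where "k = real (card D)"
  define E where "E = exp (- c / k)"
  have k: "k \<ge> 1" using D by (simp add: k_def Suc_le_eq card_gt_0_iff)
  have PD: "sum p D > 0" using D p by (intro sum_pos) auto
  obtain d0 where d0: "d0 \<in> D" "\<And>d. d \<in> D \<Longrightarrow> p d \<le> p d0"
    using D Max_in[of "p ` D"] Max_ge[of "p ` D"] by fastforce
  have PDk: "sum p D \<le> k * p d0" unfolding k_def using sum_bounded_above[of D p "p d0"] d0 by auto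
  have "x d0 \<le> - c / k"
  proof -
    have "1 / k \<le> p d0 / sum p D" using PDk PD k by (simp add: field_simps)
    then have "c * (1 / k) \<le> c * (p d0 / sum p D)" using \<open>0 \<le> c\<close> by (rule mult_left_mono)
    then show ?thesis using x[OF d0(1)] by simp
  qed
  then have "p d0 * exp (x d0) \<le> p d0 * E" using p[OF d0(1)] by (simp add: E_def)
  moreover have "(\<Sum>d\<in>D - {d0}. p d * exp (x d)) \<le> (\<Sum>d\<in>D - {d0}. p d)"
  proof (intro sum_mono)
    fix d assume "d \<in> D - {d0}"
    have "0 \<le> c * p d / sum p D" using p[of d] PD \<open>0 \<le> c\<close> \<open>d \<in> D - {d0}\<close> by simp
    then have "x d \<le> 0" using x[of d] \<open>d \<in> D - {d0}\<close> by simp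
    then show "p d * exp (x d) \<le> p d" using p[of d] \<open>d \<in> D - {d0}\<close> by (simp add: mult_left_le)
  qed
  moreover have "(\<Sum>d\<in>D. p d * exp (x d)) = p d0 * exp (x d0) + (\<Sum>d\<in>D - {d0}. p d * exp (x d))"
    using D(1) d0(1) by (rule sum.remove)
  moreover have "(\<Sum>d\<in>D - {d0}. p d) = sum p D - p d0"
    using D(1) d0(1) by (simp add: sum_diff1)
  moreover have "(sum p D / k) * (1 - E) \<le> p d0 * (1 - E)"
    using PDk k \<open>0 \<le> c\<close> by (intro mult_right_mono) (auto simp: E_def field_simps)
  moreover have "p d0 * (1 - E) = p d0 - p d0 * E"
    by (simp add: right_diff_distrib)
  moreover have "(1 - (1 - E) / k) * sum p D = sum p D - (sum p D / k) * (1 - E)"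
    using k by (simp add: field_simps)
  ultimately show ?thesis unfolding E_def k_def by linarith
qed

lemma exp_contraction_factor_bounds:
  fixes c k :: real
  assumes "0 < c" "1 \<le> k"
  shows "0 \<le> 1 - (1 - exp (- c / k)) / k" "1 - (1 - exp (- c / k)) / k < 1"
proof -
  have "0 < exp (- c / k)" "exp (- c / k) < 1" using assms by auto
  moreover from this have "1 - exp (- c / k) \<le> k" using assms by linarith
  ultimately have "(1 - exp (- c / k)) / k \<le> 1" "0 < (1 - exp (- c / k)) / k"
    using assms by (simp_all add: divide_le_eq)
  then show "0 \<le> 1 - (1 - exp (- c / k)) / k" "1 - (1 - exp (- c / k)) / k < 1" by auto
qed

lemma sum_exp_pos: "(\<Sum>a\<in>UNIV. exp (\<theta> $ a)) > (0::real)"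
  by (intro sum_pos) auto

lemma softmax_nth: "softmax \<theta> $ a = exp (\<theta> $ a) / (\<Sum>b\<in>UNIV. exp (\<theta> $ b))"
  by (simp add: softmax_def)

lemma softmax_pos: "softmax \<theta> $ a > 0"
  using sum_exp_pos[of \<theta>] by (simp add: softmax_nth)

lemma softmax_nonneg [simp]: "softmax \<theta> $ a \<ge> 0"
  using softmax_pos[of \<theta> a] by simp

lemma sum_softmax: "(\<Sum>a\<in>UNIV. softmax \<theta> $ a) = 1"
  using sum_exp_pos[of \<theta>] by (simp add: softmax_nth flip: sum_divide_distrib)

lemma softmax_add:
  "softmax (\<theta> + \<delta>) $ a = softmax \<theta> $ a * exp (\<delta> $ a) / (\<Sum>b\<in>UNIV. softmax \<theta> $ b * exp (\<delta> $ b))"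
proof -
  have "(\<Sum>b\<in>UNIV. softmax \<theta> $ b * exp (\<delta> $ b))
      = (\<Sum>b\<in>UNIV. exp ((\<theta> + \<delta>) $ b)) / (\<Sum>b\<in>UNIV. exp (\<theta> $ b))"
    by (simp add: softmax_nth exp_add sum_divide_distrib)
  then show ?thesis
    using sum_exp_pos[of \<theta>] sum_exp_pos[of "\<theta> + \<delta>"] by (simp add: softmax_nth exp_add)
qed

lemma expected_reward_eq_sum: "expected_reward r \<theta> = (\<Sum>a\<in>UNIV. softmax \<theta> $ a * r $ a)"
  by (simp add: expected_reward_def inner_vec_def)

definition reward_grad :: "real^'k \<Rightarrow> real^'k \<Rightarrow> real^'k" where
  "reward_grad r \<theta> = (\<chi> a. softmax \<theta> $ a * (r $ a - expected_reward r \<theta>))"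

lemma reward_grad_nth: "reward_grad r \<theta> $ a = softmax \<theta> $ a * (r $ a - expected_reward r \<theta>)"
  by (simp add: reward_grad_def)

lemma sum_reward_grad: "(\<Sum>a\<in>UNIV. reward_grad r \<theta> $ a) = 0"
  by (simp add: reward_grad_nth right_diff_distrib sum_subtractf sum_softmax
      flip: expected_reward_eq_sum sum_distrib_right)

lemma grad_eqI:
  assumes "(f has_derivative (\<lambda>h. h \<bullet> D)) (at x)"
  shows "grad f x = D"
  unfolding grad_def
proof (rule the_equality)
  show "GDERIV f x :> D" unfolding gderiv_def by (rule assms)
next
  fix D' assume "GDERIV f x :> D'"
  then have "(f has_derivative (\<lambda>h. h \<bullet> D')) (at x)" unfolding gderiv_def .
  from has_derivative_unique[OF this assms] have "\<And>h. h \<bullet> D' = h \<bullet> D" by metis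
  from this[of "D' - D"] have "(D' - D) \<bullet> (D' - D) = 0" by (simp add: inner_diff_right)
  then show "D' = D" by simp
qed

lemma has_derivative_expected_reward:
  "(expected_reward r has_derivative (\<lambda>h. h \<bullet> reward_grad r \<theta>)) (at \<theta>)"
proof -
  define Z where "Z = (\<Sum>a\<in>UNIV. exp (\<theta> $ a))"
  define N where "N = (\<Sum>a\<in>UNIV. exp (\<theta> $ a) * r $ a)"
  have Z: "Z \<noteq> 0" using sum_exp_pos[of \<theta>] by (simp add: Z_def)
  have g: "expected_reward r = (\<lambda>\<theta>. (\<Sum>a\<in>UNIV. exp (\<theta> $ a) * r $ a) / (\<Sum>a\<in>UNIV. exp (\<theta> $ a)))"
    by (simp add: fun_eq_iff expected_reward_eq_sum softmax_nth sum_divide_distrib)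
  have nth: "((\<lambda>\<theta>. \<theta> $ a) has_derivative (\<lambda>h. h $ a)) (at \<theta>)" for a
    by (rule bounded_linear_imp_has_derivative) (rule bounded_linear_vec_nth)
  have g_eq: "expected_reward r \<theta> = N / Z"
    by (simp add: g N_def Z_def)
  have lin: "(\<lambda>h. ((\<Sum>a\<in>UNIV. h $ a * exp (\<theta> $ a) * r $ a) * Z - N * (\<Sum>a\<in>UNIV. h $ a * exp (\<theta> $ a))) / (Z * Z))
      = (\<lambda>h. h \<bullet> reward_grad r \<theta>)"
  proof (intro ext)
    fix h
    have "h \<bullet> reward_grad r \<theta>
        = (\<Sum>a\<in>UNIV. h $ a * exp (\<theta> $ a) * r $ a / Z - N / (Z * Z) * (h $ a * exp (\<theta> $ a)))"
      unfolding inner_vec_def reward_grad_nth softmax_nth Z_def[symmetric] g_eq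
      using Z by (intro sum.cong refl) (simp add: field_simps)
    also have "\<dots> = ((\<Sum>a\<in>UNIV. h $ a * exp (\<theta> $ a) * r $ a) * Z - N * (\<Sum>a\<in>UNIV. h $ a * exp (\<theta> $ a))) / (Z * Z)"
      using Z by (simp add: sum_subtractf field_simps flip: sum_divide_distrib sum_distrib_left)
    finally show "\<dots> = h \<bullet> reward_grad r \<theta>" by simp
  qed
  show ?thesis
    unfolding g by (auto intro!: derivative_eq_intros nth simp: Z Z_def[symmetric] N_def[symmetric] lin)
qed

lemma grad_expected_reward: "grad (expected_reward r) \<theta> = reward_grad r \<theta>"
  by (rule grad_eqI) (rule has_derivative_expected_reward)

lemma expected_reward_add:
  fixes r \<theta> \<delta> :: "real^'k"
  defines "W \<equiv> (\<Sum>b\<in>UNIV. softmax \<theta> $ b * exp (\<delta> $ b))"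
  shows "expected_reward r (\<theta> + \<delta>) - expected_reward r \<theta>
    = (\<Sum>a\<in>UNIV. reward_grad r \<theta> $ a * (exp (\<delta> $ a) - 1)) / W"
proof -
  have W: "W > 0" unfolding W_def by (intro sum_pos) (auto simp: softmax_pos)
  have new: "expected_reward r (\<theta> + \<delta>) = (\<Sum>a\<in>UNIV. softmax \<theta> $ a * exp (\<delta> $ a) * r $ a) / W"
    by (simp add: expected_reward_eq_sum softmax_add W_def sum_divide_distrib)
  have "(\<Sum>a\<in>UNIV. softmax \<theta> $ a * exp (\<delta> $ a) * r $ a) - expected_reward r \<theta> * W
      = (\<Sum>a\<in>UNIV. reward_grad r \<theta> $ a * (exp (\<delta> $ a) - 1)) + (\<Sum>a\<in>UNIV. reward_grad r \<theta> $ a)"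
    unfolding W_def sum_distrib_left reward_grad_nth sum.distrib[symmetric] sum_subtractf[symmetric]
    by (intro sum.cong refl) (simp add: algebra_simps)
  with W show ?thesis
    unfolding new by (simp add: sum_reward_grad field_simps)
qed

definition ngd_increment :: "real^'k \<Rightarrow> real^'k \<Rightarrow> real^'k" where
  "ngd_increment r \<theta> = (1 / (6 * norm (reward_grad r \<theta>))) *\<^sub>R reward_grad r \<theta>"

definition ngd_step :: "real^'k \<Rightarrow> real^'k \<Rightarrow> real^'k" where
  "ngd_step r \<theta> = \<theta> + ngd_increment r \<theta>"

lemma abs_ngd_increment_le: "\<bar>ngd_increment r \<theta> $ a\<bar> \<le> 1/6"
  using component_le_norm_cart[of "reward_grad r \<theta>" a]
  by (cases "reward_grad r \<theta> = 0") (auto simp: ngd_increment_def abs_mult divide_le_eq)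

lemma sum_softmax_exp_ngd_increment_le:
  "(\<Sum>b\<in>UNIV. softmax \<theta> $ b * exp (ngd_increment r \<theta> $ b)) \<le> 43/36"
proof -
  have "exp (ngd_increment r \<theta> $ b) \<le> 43/36" for b
  proof -
    have "exp (ngd_increment r \<theta> $ b) \<le> exp (1/6)" using abs_ngd_increment_le[of r \<theta> b] by simp
    also have "\<dots> \<le> 43/36" using exp_bound[of "1/6::real"] by (simp add: power2_eq_square)
    finally show ?thesis .
  qed
  then have "(\<Sum>b\<in>UNIV. softmax \<theta> $ b * exp (ngd_increment r \<theta> $ b)) \<le> (\<Sum>b\<in>UNIV. softmax \<theta> $ b * (43/36))"
    by (intro sum_mono mult_left_mono) auto
  also have "\<dots> = 43/36"
    by (simp only: sum_softmax flip: sum_distrib_right)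
  finally show ?thesis .
qed

lemma sum_reward_grad_mult_exp_ngd_increment_ge:
  "(5/36) * norm (reward_grad r \<theta>) \<le> (\<Sum>a\<in>UNIV. reward_grad r \<theta> $ a * (exp (ngd_increment r \<theta> $ a) - 1))"
proof (cases "reward_grad r \<theta> = 0")
  case True
  then show ?thesis by simp
next
  case False
  define G where "G = reward_grad r \<theta>"
  define u where "u = ngd_increment r \<theta>"
  have N: "norm G > 0" using False by (simp add: G_def)
  have "(5/36) * (G $ a)\<^sup>2 / norm G \<le> G $ a * (exp (u $ a) - 1)" for a
  proof -
    have Ga: "G $ a = 6 * norm G * u $ a" using N by (simp add: u_def G_def ngd_increment_def)
    then have "(5/36) * (G $ a)\<^sup>2 / norm G = 6 * norm G * ((5/6) * (u $ a)\<^sup>2)"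
      using N by (simp add: power2_eq_square field_simps)
    also have "\<dots> \<le> 6 * norm G * (u $ a * (exp (u $ a) - 1))"
      using N exp_minus_one_mult_ge[OF abs_ngd_increment_le[of r \<theta> a]]
      by (intro mult_left_mono) (auto simp: u_def)
    also have "\<dots> = G $ a * (exp (u $ a) - 1)" using Ga by simp
    finally show ?thesis .
  qed
  then have "(\<Sum>a\<in>UNIV. (5/36) * (G $ a)\<^sup>2 / norm G) \<le> (\<Sum>a\<in>UNIV. G $ a * (exp (u $ a) - 1))"
    by (rule sum_mono)
  moreover have "(\<Sum>a\<in>UNIV. (5/36) * (G $ a)\<^sup>2 / norm G) = (5/36) * norm G"
  proof -
    have "(\<Sum>a\<in>UNIV. (G $ a)\<^sup>2) = (norm G)\<^sup>2"
      unfolding power2_norm_eq_inner by (simp add: inner_vec_def power2_eq_square)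
    then show ?thesis
      unfolding sum_divide_distrib[symmetric] sum_distrib_left[symmetric] using N
      by (simp add: power2_eq_square)
  qed
  ultimately show ?thesis by (simp add: G_def u_def)
qed

lemma expected_reward_ngd_step_ge:
  "expected_reward r (ngd_step r \<theta>) - expected_reward r \<theta> \<ge> norm (reward_grad r \<theta>) / 12"
proof -
  define W where "W = (\<Sum>b\<in>UNIV. softmax \<theta> $ b * exp (ngd_increment r \<theta> $ b))"
  have W: "0 < W" "W \<le> 43/36"
    using sum_softmax_exp_ngd_increment_le[of \<theta> r]
    by (auto simp: W_def softmax_pos intro!: sum_pos)
  have "norm (reward_grad r \<theta>) / 12 \<le> (5/36) * norm (reward_grad r \<theta>) / (43/36)" by simp
  also have "\<dots> \<le> (5/36) * norm (reward_grad r \<theta>) / W"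
    using W by (intro divide_left_mono) auto
  also have "\<dots> \<le> (\<Sum>a\<in>UNIV. reward_grad r \<theta> $ a * (exp (ngd_increment r \<theta> $ a) - 1)) / W"
    using W sum_reward_grad_mult_exp_ngd_increment_ge[of r \<theta>] by (intro divide_right_mono) auto
  also have "\<dots> = expected_reward r (ngd_step r \<theta>) - expected_reward r \<theta>"
    by (simp add: ngd_step_def expected_reward_add W_def)
  finally show ?thesis .
qed

locale bandit =
  fixes r :: "real^'k" and astar :: 'k
  assumes card_ge_2: "CARD('k) \<ge> 2"
    and reward_bounds: "\<And>a. 0 \<le> r $ a \<and> r $ a \<le> 1"
    and reward_unique_max: "\<And>a. a \<noteq> astar \<Longrightarrow> r $ a < r $ astar"
begin

lemma ex_suboptimal: "\<exists>a. a \<noteq> astar"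
proof (rule ccontr)
  assume "\<nexists>a. a \<noteq> astar"
  then have "UNIV = {astar}" by auto
  then have "CARD('k) = card {astar}" by (simp only:)
  with card_ge_2 show False by simp
qed

lemma expected_reward_less_opt: "expected_reward r \<theta> < r $ astar"
proof -
  obtain a where a: "a \<noteq> astar" using ex_suboptimal by blast
  have "(\<Sum>b\<in>UNIV. softmax \<theta> $ b * r $ b) < (\<Sum>b\<in>UNIV. softmax \<theta> $ b * r $ astar)"
  proof (rule sum_strict_mono_ex1)
    show "\<forall>b\<in>UNIV. softmax \<theta> $ b * r $ b \<le> softmax \<theta> $ b * r $ astar"
      using reward_unique_max by (metis mult_left_mono order_refl less_imp_le softmax_nonneg)
    show "\<exists>b\<in>UNIV. softmax \<theta> $ b * r $ b < softmax \<theta> $ b * r $ astar"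
      using reward_unique_max[OF a] softmax_pos[of \<theta> a] by (metis UNIV_I mult_strict_left_mono)
  qed simp
  then show ?thesis by (simp add: expected_reward_eq_sum sum_softmax flip: sum_distrib_right)
qed

lemma norm_reward_grad_ge: "softmax \<theta> $ astar * (r $ astar - expected_reward r \<theta>) \<le> norm (reward_grad r \<theta>)"
  using component_le_norm_cart[of "reward_grad r \<theta>" astar] expected_reward_less_opt[of \<theta>]
  by (simp add: reward_grad_nth)

lemma norm_reward_grad_pos: "0 < norm (reward_grad r \<theta>)"
  using norm_reward_grad_ge[of \<theta>] expected_reward_less_opt[of \<theta>] softmax_pos[of \<theta> astar]
  by (smt (verit) mult_pos_pos)

lemma ngd_increment_opt_nonneg: "0 \<le> ngd_increment r \<theta> $ astar"
  using expected_reward_less_opt[of \<theta>]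
  by (simp add: ngd_increment_def reward_grad_nth)

lemma softmax_ngd_step:
  "softmax (ngd_step r \<theta>) $ a = softmax \<theta> $ a * exp (ngd_increment r \<theta> $ a)
     / (\<Sum>b\<in>UNIV. softmax \<theta> $ b * exp (ngd_increment r \<theta> $ b))"
  by (simp add: ngd_step_def softmax_add)

lemma suboptimality_ngd_step:
  "r $ astar - expected_reward r (ngd_step r \<theta>)
     \<le> (1 - softmax \<theta> $ astar / 12) * (r $ astar - expected_reward r \<theta>)"
proof -
  have "(1 - softmax \<theta> $ astar / 12) * (r $ astar - expected_reward r \<theta>)
      = (r $ astar - expected_reward r \<theta>) - softmax \<theta> $ astar * (r $ astar - expected_reward r \<theta>) / 12"
    by (simp add: algebra_simps)
  with expected_reward_ngd_step_ge[of r \<theta>] norm_reward_grad_ge[of \<theta>] show ?thesis by linarith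
qed

lemma softmax_opt_ngd_step_mono:
  assumes "\<And>a. a \<noteq> astar \<Longrightarrow> r $ a \<le> expected_reward r \<theta>"
  shows "softmax \<theta> $ astar \<le> softmax (ngd_step r \<theta>) $ astar"
proof -
  define u where "u = ngd_increment r \<theta>"
  define W where "W = (\<Sum>b\<in>UNIV. softmax \<theta> $ b * exp (u $ b))"
  have W: "0 < W" unfolding W_def by (intro sum_pos) (auto simp: softmax_pos)
  have "u $ a \<le> u $ astar" for a
  proof (cases "a = astar")
    case False
    then have "u $ a \<le> 0"
      using assms[OF False]
      by (simp add: u_def ngd_increment_def reward_grad_nth mult_nonneg_nonpos divide_nonpos_nonneg)
    then show ?thesis using ngd_increment_opt_nonneg[of \<theta>] by (simp add: u_def)
  qed simp
  then have "W \<le> (\<Sum>b\<in>UNIV. softmax \<theta> $ b * exp (u $ astar))"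
    unfolding W_def by (intro sum_mono mult_left_mono) auto
  also have "\<dots> = exp (u $ astar)" by (simp add: sum_softmax flip: sum_distrib_right)
  finally have "softmax \<theta> $ astar * exp (u $ astar) / exp (u $ astar) \<le> softmax \<theta> $ astar * exp (u $ astar) / W"
    using W by (intro divide_left_mono) auto
  then show ?thesis by (simp add: softmax_ngd_step u_def W_def)
qed

lemma norm_reward_grad_le_suboptimal_mass:
  assumes low: "\<And>d. d \<in> D \<Longrightarrow> r $ d \<le> expected_reward r \<theta>"
    and high: "\<And>a. a \<notin> D \<Longrightarrow> expected_reward r \<theta> \<le> r $ a"
  shows "norm (reward_grad r \<theta>) \<le> 2 * (\<Sum>d\<in>D. softmax \<theta> $ d)"
proof -
  let ?G = "reward_grad r \<theta>"
  have "\<bar>?G $ a\<bar> \<le> ?G $ a + 2 * (if a \<in> D then softmax \<theta> $ a else 0)" for a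
  proof (cases "a \<in> D")
    case True
    have "expected_reward r \<theta> - r $ a \<le> 1"
      using expected_reward_less_opt[of \<theta>] reward_bounds[of a] reward_bounds[of astar] by linarith
    then have "softmax \<theta> $ a * (expected_reward r \<theta> - r $ a) \<le> softmax \<theta> $ a"
      by (intro mult_left_le) auto
    then have "- ?G $ a \<le> softmax \<theta> $ a"
      by (simp add: reward_grad_nth algebra_simps)
    moreover have "?G $ a \<le> 0"
      using low[OF True] by (simp add: reward_grad_nth mult_nonneg_nonpos)
    ultimately show ?thesis using True by (simp add: abs_of_nonpos)
  next
    case False
    then show ?thesis using high[OF False] by (simp add: reward_grad_nth)
  qed
  then have "norm ?G \<le> (\<Sum>a\<in>UNIV. ?G $ a + 2 * (if a \<in> D then softmax \<theta> $ a else 0))"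
    using norm_le_l1_cart[of ?G] by (smt (verit) sum_mono)
  also have "\<dots> = 2 * (\<Sum>d\<in>D. softmax \<theta> $ d)"
    by (simp add: sum.distrib sum_reward_grad sum.If_cases flip: sum_distrib_left)
  finally show ?thesis .
qed

lemma ngd_increment_le_on_suboptimal:
  assumes "m > 0" and low: "\<And>d. d \<in> D \<Longrightarrow> r $ d + m \<le> expected_reward r \<theta>"
    and high: "\<And>a. a \<notin> D \<Longrightarrow> expected_reward r \<theta> \<le> r $ a" and "d \<in> D"
  shows "ngd_increment r \<theta> $ d \<le> - (m / 12) * softmax \<theta> $ d / (\<Sum>d\<in>D. softmax \<theta> $ d)"
proof -
  define N where "N = norm (reward_grad r \<theta>)"
  have "r $ d' \<le> expected_reward r \<theta>" if "d' \<in> D" for d'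
    using low[OF that] \<open>m > 0\<close> by linarith
  then have N: "0 < N" "N \<le> 2 * (\<Sum>d\<in>D. softmax \<theta> $ d)"
    using norm_reward_grad_pos[of \<theta>] norm_reward_grad_le_suboptimal_mass[of D \<theta>] high
    by (auto simp: N_def)
  have "r $ d - expected_reward r \<theta> \<le> - m" using low[OF \<open>d \<in> D\<close>] by linarith
  then have "softmax \<theta> $ d * (r $ d - expected_reward r \<theta>) \<le> softmax \<theta> $ d * (- m)"
    by (rule mult_left_mono) simp
  then have "softmax \<theta> $ d * (r $ d - expected_reward r \<theta>) / (6 * N) \<le> softmax \<theta> $ d * (- m) / (6 * N)"
    using N by (intro divide_right_mono) auto
  then have "ngd_increment r \<theta> $ d \<le> - (m * softmax \<theta> $ d) / (6 * N)"
    by (simp add: ngd_increment_def reward_grad_nth N_def mult.commute)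
  also have "\<dots> \<le> - (m * softmax \<theta> $ d) / (12 * (\<Sum>d\<in>D. softmax \<theta> $ d))"
  proof -
    have "m * softmax \<theta> $ d / (12 * (\<Sum>d\<in>D. softmax \<theta> $ d)) \<le> m * softmax \<theta> $ d / (6 * N)"
      using N \<open>m > 0\<close> softmax_pos[of \<theta> d] by (intro divide_left_mono) auto
    then show ?thesis by simp
  qed
  finally show ?thesis by (simp add: field_simps)
qed

lemma suboptimal_mass_ratio_contracts:
  assumes "D \<noteq> {}" "m > 0"
    and low: "\<And>d. d \<in> D \<Longrightarrow> r $ d + m \<le> expected_reward r \<theta>"
    and high: "\<And>a. a \<notin> D \<Longrightarrow> expected_reward r \<theta> \<le> r $ a"
  shows "(\<Sum>d\<in>D. softmax (ngd_step r \<theta>) $ d) / softmax (ngd_step r \<theta>) $ astar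
    \<le> (1 - (1 - exp (- (m / 12) / card D)) / card D) * ((\<Sum>d\<in>D. softmax \<theta> $ d) / softmax \<theta> $ astar)"
proof -
  define u where "u = ngd_increment r \<theta>"
  define W where "W = (\<Sum>b\<in>UNIV. softmax \<theta> $ b * exp (u $ b))"
  have W: "0 < W" unfolding W_def by (intro sum_pos) (auto simp: softmax_pos)
  have pos: "0 < softmax \<theta> $ astar" by (rule softmax_pos)
  have "(\<Sum>d\<in>D. softmax (ngd_step r \<theta>) $ d) / softmax (ngd_step r \<theta>) $ astar
      = (\<Sum>d\<in>D. softmax \<theta> $ d * exp (u $ d)) / (softmax \<theta> $ astar * exp (u $ astar))"
    using W by (simp add: softmax_ngd_step u_def W_def flip: sum_divide_distrib)
  also have "\<dots> \<le> (\<Sum>d\<in>D. softmax \<theta> $ d * exp (u $ d)) / softmax \<theta> $ astar"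
    using pos ngd_increment_opt_nonneg[of \<theta>]
    by (intro divide_left_mono sum_nonneg) (auto simp: u_def)
  also have "\<dots> \<le> (1 - (1 - exp (- (m / 12) / card D)) / card D) * (\<Sum>d\<in>D. softmax \<theta> $ d) / softmax \<theta> $ astar"
  proof (rule divide_right_mono)
    show "(\<Sum>d\<in>D. softmax \<theta> $ d * exp (u $ d))
        \<le> (1 - (1 - exp (- (m / 12) / card D)) / card D) * (\<Sum>d\<in>D. softmax \<theta> $ d)"
      using \<open>m > 0\<close> \<open>D \<noteq> {}\<close> ngd_increment_le_on_suboptimal[OF \<open>m > 0\<close> low high]
      by (intro sum_mult_exp_le) (auto simp: u_def softmax_pos)
  qed (use pos in simp)
  finally show ?thesis by simp
qed

lemma opt_mass_gap_le_suboptimal_mass: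
  assumes "expected_reward r \<theta> \<le> L" "L \<le> r $ astar"
  shows "softmax \<theta> $ astar * (r $ astar - L) \<le> (\<Sum>d\<in>{a. r $ a < L}. softmax \<theta> $ d)"
proof -
  let ?D = "{a. r $ a < L}" and ?p = "\<lambda>a. softmax \<theta> $ a"
  have "0 \<le> L - expected_reward r \<theta>" using assms by simp
  also have "\<dots> = (\<Sum>a\<in>UNIV. ?p a * (L - r $ a))"
    by (simp add: expected_reward_eq_sum right_diff_distrib sum_subtractf sum_softmax flip: sum_distrib_right)
  also have "\<dots> \<le> (\<Sum>a\<in>UNIV. (if a \<in> ?D then ?p a else 0) + (if a = astar then ?p a * (L - r $ astar) else 0))"
  proof (intro sum_mono)
    fix a
    show "?p a * (L - r $ a) \<le> (if a \<in> ?D then ?p a else 0) + (if a = astar then ?p a * (L - r $ astar) else 0)"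
    proof (cases "a \<in> ?D")
      case True
      then have "a \<noteq> astar" using assms(2) by auto
      moreover have "L - r $ a \<le> 1" using reward_bounds[of a] reward_bounds[of astar] assms(2) by linarith
      ultimately show ?thesis using True by (simp add: mult_left_le)
    next
      case False
      then show ?thesis by (simp add: mult_nonneg_nonpos)
    qed
  qed
  also have "\<dots> = (\<Sum>d\<in>?D. ?p d) + ?p astar * (L - r $ astar)"
    by (simp add: sum.distrib sum.If_cases)
  moreover have "?p astar * (L - r $ astar) = - (?p astar * (r $ astar - L))" by (simp add: algebra_simps)
  ultimately show ?thesis by linarith
qed

end

locale ngd_iterates = bandit +
  fixes \<phi> :: "nat \<Rightarrow> real^'k"
  assumes \<phi>_Suc: "\<phi> (Suc n) = ngd_step r (\<phi> n)"
begin

lemma incseq_expected_reward: "incseq (\<lambda>n. expected_reward r (\<phi> n))"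
proof (rule incseq_SucI)
  fix n
  show "expected_reward r (\<phi> n) \<le> expected_reward r (\<phi> (Suc n))"
    using expected_reward_ngd_step_ge[of r "\<phi> n"] norm_ge_zero[of "reward_grad r (\<phi> n)"]
    unfolding \<phi>_Suc by linarith
qed

lemma bdd_above_expected_reward: "bdd_above (range (\<lambda>n. expected_reward r (\<phi> n)))"
  using expected_reward_less_opt by (intro bdd_aboveI[of _ "r $ astar"]) (auto intro: less_imp_le)

lemma suboptimal_mass_ratio_eventually_contracts:
  assumes "D \<noteq> {}" and n0: "\<And>d. d \<in> D \<Longrightarrow> r $ d < expected_reward r (\<phi> n0)"
    and high: "\<And>n a. a \<notin> D \<Longrightarrow> expected_reward r (\<phi> n) \<le> r $ a"
  shows "\<exists>\<rho>. 0 \<le> \<rho> \<and> \<rho> < 1 \<and> (\<forall>n\<ge>n0.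
    (\<Sum>d\<in>D. softmax (\<phi> (Suc n)) $ d) / softmax (\<phi> (Suc n)) $ astar
      \<le> \<rho> * ((\<Sum>d\<in>D. softmax (\<phi> n) $ d) / softmax (\<phi> n) $ astar))"
proof (intro exI conjI allI impI)
  define m where "m = expected_reward r (\<phi> n0) - Max ((\<lambda>a. r $ a) ` D)"
  have "Max ((\<lambda>a. r $ a) ` D) \<in> (\<lambda>a. r $ a) ` D" using \<open>D \<noteq> {}\<close> by (intro Max_in) auto
  then have "m > 0" using n0 by (auto simp: m_def)
  define \<rho> where "\<rho> = 1 - (1 - exp (- (m / 12) / card D)) / card D"
  show "0 \<le> \<rho>" "\<rho> < 1"
    using exp_contraction_factor_bounds[of "m / 12" "card D"] \<open>m > 0\<close> \<open>D \<noteq> {}\<close>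
    by (auto simp: \<rho>_def Suc_le_eq card_gt_0_iff)
  fix n assume "n0 \<le> n"
  with incseq_expected_reward have mono: "expected_reward r (\<phi> n0) \<le> expected_reward r (\<phi> n)"
    by (rule incseqD)
  have "r $ d + m \<le> expected_reward r (\<phi> n)" if "d \<in> D" for d
  proof -
    have "r $ d \<le> Max ((\<lambda>a. r $ a) ` D)" using that by (intro Max_ge) auto
    with mono show ?thesis by (simp add: m_def)
  qed
  with suboptimal_mass_ratio_contracts[OF \<open>D \<noteq> {}\<close> \<open>m > 0\<close>, of "\<phi> n"] high
  show "(\<Sum>d\<in>D. softmax (\<phi> (Suc n)) $ d) / softmax (\<phi> (Suc n)) $ astar
      \<le> \<rho> * ((\<Sum>d\<in>D. softmax (\<phi> n) $ d) / softmax (\<phi> n) $ astar)"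
    by (simp add: \<rho>_def \<phi>_Suc)
qed

lemma SUP_expected_reward: "(SUP n. expected_reward r (\<phi> n)) = r $ astar"
proof (rule antisym)
  show "(SUP n. expected_reward r (\<phi> n)) \<le> r $ astar"
    using expected_reward_less_opt by (intro cSUP_least) (auto simp: less_imp_le)
  show "r $ astar \<le> (SUP n. expected_reward r (\<phi> n))"
  proof (rule ccontr)
    define L where "L = (SUP n. expected_reward r (\<phi> n))"
    define D where "D = {a. r $ a < L}"
    define Q where "Q = (\<lambda>n. (\<Sum>d\<in>D. softmax (\<phi> n) $ d) / softmax (\<phi> n) $ astar)"
    assume "\<not> r $ astar \<le> (SUP n. expected_reward r (\<phi> n))"
    then have L: "L < r $ astar" by (simp add: L_def)
    have below_L: "expected_reward r (\<phi> n) \<le> L" for n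
      unfolding L_def using bdd_above_expected_reward by (intro cSUP_upper) auto
    have gap: "r $ astar - L \<le> Q n" for n
      using opt_mass_gap_le_suboptimal_mass[OF below_L L[THEN less_imp_le]] softmax_pos[of "\<phi> n" astar]
      by (simp add: Q_def D_def pos_le_divide_eq mult.commute)
    then have "D \<noteq> {}" using L by (auto simp: Q_def)
    have "Max ((\<lambda>a. r $ a) ` D) < L" using \<open>D \<noteq> {}\<close> by (subst Max_less_iff) (auto simp: D_def)
    then obtain n0 where n0: "Max ((\<lambda>a. r $ a) ` D) < expected_reward r (\<phi> n0)"
      unfolding L_def using bdd_above_expected_reward by (auto simp: less_cSUP_iff)
    have "r $ d < expected_reward r (\<phi> n0)" if "d \<in> D" for d
    proof -
      have "r $ d \<le> Max ((\<lambda>a. r $ a) ` D)" using that by (intro Max_ge) auto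
      with n0 show ?thesis by linarith
    qed
    moreover have "expected_reward r (\<phi> n) \<le> r $ a" if "a \<notin> D" for n a
      using below_L[of n] that by (simp add: D_def)
    ultimately obtain \<rho> where "0 \<le> \<rho>" "\<rho> < 1" "\<forall>n\<ge>n0. Q (Suc n) \<le> \<rho> * Q n"
      using suboptimal_mass_ratio_eventually_contracts[OF \<open>D \<noteq> {}\<close>] unfolding Q_def by blast
    with contraction_eventually_less L obtain n where "Q n < r $ astar - L" by (metis diff_gt_0_iff_gt)
    with gap[of n] show False by simp
  qed
qed

lemma eventually_expected_reward_gt_suboptimal:
  "\<exists>n0. \<forall>n\<ge>n0. \<forall>a. a \<noteq> astar \<longrightarrow> r $ a < expected_reward r (\<phi> n)"
proof -
  define R where "R = Max ((\<lambda>a. r $ a) ` (UNIV - {astar}))"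
  have "R \<in> (\<lambda>a. r $ a) ` (UNIV - {astar})"
    unfolding R_def using ex_suboptimal by (intro Max_in) auto
  then have "R < (SUP n. expected_reward r (\<phi> n))"
    using reward_unique_max by (auto simp: SUP_expected_reward)
  then obtain n0 where n0: "R < expected_reward r (\<phi> n0)"
    using bdd_above_expected_reward by (auto simp: less_cSUP_iff)
  have "r $ a < expected_reward r (\<phi> n)" if "n \<ge> n0" "a \<noteq> astar" for n a
  proof -
    have "r $ a \<le> R" unfolding R_def using that(2) by (intro Max_ge) auto
    also have "\<dots> < expected_reward r (\<phi> n0)" by (fact n0)
    also have "\<dots> \<le> expected_reward r (\<phi> n)" using incseq_expected_reward that(1) by (rule incseqD)
    finally show ?thesis .
  qed
  then show ?thesis by blast
qed

lemma softmax_opt_bounded_below: "\<exists>M>0. \<forall>n. M \<le> softmax (\<phi> n) $ astar"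
proof -
  obtain n0 where "\<forall>n\<ge>n0. \<forall>a. a \<noteq> astar \<longrightarrow> r $ a < expected_reward r (\<phi> n)"
    using eventually_expected_reward_gt_suboptimal by blast
  then have "softmax (\<phi> n) $ astar \<le> softmax (\<phi> (Suc n)) $ astar" if "n \<ge> n0" for n
    unfolding \<phi>_Suc using that by (intro softmax_opt_ngd_step_mono) (auto intro: less_imp_le)
  then show ?thesis using softmax_pos by (intro eventually_mono_pos_bounded_below)
qed

lemma suboptimality_le_exp:
  assumes c: "\<And>n. c \<le> softmax (\<phi> n) $ astar"
  shows "r $ astar - expected_reward r (\<phi> n)
    \<le> exp (- (c * n / 12)) * (r $ astar - expected_reward r (\<phi> 0))"
proof (induction n)
  case (Suc n)
  let ?\<delta> = "\<lambda>n. r $ astar - expected_reward r (\<phi> n)"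
  have "?\<delta> (Suc n) \<le> (1 - softmax (\<phi> n) $ astar / 12) * ?\<delta> n"
    unfolding \<phi>_Suc by (rule suboptimality_ngd_step)
  also have "\<dots> \<le> (1 - c / 12) * ?\<delta> n"
    using c[of n] expected_reward_less_opt[of "\<phi> n"] by (intro mult_right_mono) auto
  also have "\<dots> \<le> exp (- (c / 12)) * ?\<delta> n"
    using exp_ge_add_one_self[of "- (c / 12)"] expected_reward_less_opt[of "\<phi> n"]
    by (intro mult_right_mono) auto
  also have "\<dots> \<le> exp (- (c / 12)) * (exp (- (c * n / 12)) * ?\<delta> 0)"
    using Suc.IH by (intro mult_left_mono) auto
  also have "\<dots> = exp (- (c * Suc n / 12)) * ?\<delta> 0"
    by (simp add: mult.assoc distrib_left add_divide_distrib flip: exp_add)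
  finally show ?case .
qed simp

end

lemma point_mass_diff_softmax_inner:
  "(point_mass a - softmax \<theta>) \<bullet> r = r $ a - expected_reward r \<theta>"
  by (simp add: point_mass_def inner_diff_left inner_axis' expected_reward_def)

theorem theorem2:
  fixes r :: "real^'k" and astar :: 'k and \<theta> :: "nat \<Rightarrow> real^'k"
  assumes "CARD('k) \<ge> 2"
    and "\<forall>a. 0 \<le> r $ a \<and> r $ a \<le> 1"
    and "\<forall>a. a \<noteq> astar \<longrightarrow> r $ a < r $ astar"
    and "\<forall>t\<ge>1. \<theta> (Suc t) = \<theta> t + (1/6) *\<^sub>R
           ((1 / norm (grad (expected_reward r) (\<theta> t))) *\<^sub>R grad (expected_reward r) (\<theta> t))"
  shows "let c = (INF t\<in>{1::nat..}. softmax (\<theta> t) $ astar) in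
           c > 0 \<and>
           (\<forall>t\<ge>1. (point_mass astar - softmax (\<theta> t)) \<bullet> r
                 \<le> exp (- (c * (real t - 1) / 12)) * ((point_mass astar - softmax (\<theta> 1)) \<bullet> r))"
proof -
  interpret ngd_iterates r astar "\<lambda>n. \<theta> (Suc n)"
    using assms by unfold_locales (auto simp: ngd_step_def ngd_increment_def grad_expected_reward)
  define c where "c = (INF t\<in>{1::nat..}. softmax (\<theta> t) $ astar)"
  obtain M where "M > 0" and M: "\<And>n. M \<le> softmax (\<theta> (Suc n)) $ astar"
    using softmax_opt_bounded_below by auto
  have "M \<le> softmax (\<theta> t) $ astar" if "t \<ge> 1" for t
    using M that by (cases t) auto
  then have "M \<le> c" unfolding c_def by (intro cINF_greatest) auto
  have "c \<le> softmax (\<theta> (Suc n)) $ astar" for n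
    unfolding c_def by (rule cINF_lower) (auto intro: bdd_belowI[of _ 0])
  then have "(point_mass astar - softmax (\<theta> t)) \<bullet> r
      \<le> exp (- (c * (real t - 1) / 12)) * ((point_mass astar - softmax (\<theta> 1)) \<bullet> r)" if "t \<ge> 1" for t
    using suboptimality_le_exp[of c "t - 1"] that
    by (simp add: point_mass_diff_softmax_inner of_nat_diff)
  with \<open>M > 0\<close> \<open>M \<le> c\<close> show ?thesis by (simp add: Let_def c_def)
qed

end
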